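(* For every integer $n\ge1$, \[ \frac{1}{n+1}\sum_{j=0}^{n}\sum_{i=0}^{j}\frac{\binom{3n+2}{i}}{\binom{2n+1}{j}}=2^{n}\left(\frac34+\sum_{k=1}^{n-1}\frac{1}{2^{k}k}\left(1-\frac{5k+12}{8k+12}\,\frac{\binom{3k+2}{k}}{\binom{2k+1}{k}}\right)\right). \]
   Context: Empty sums are $0$. *)

theory Defs
  imports Complex_Main
begin

end

theory Submission
  imports Defs
begin

text \<open>
  Write \<open>P(m,j) = \<Sum>i\<le>j. (m choose i)\<close> and \<open>M = 2n+1\<close>, \<open>N = 3n+2\<close>, so that the left-hand side
  is \<open>S(n)/(n+1)\<close> with \<open>S(n) = \<Sum>j\<le>n. P(N,j)/(M choose j)\<close>. Because \<open>P(m+1,j) = 2P(m,j) - (m choose j)\<close>,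
  every shift in \<open>n\<close> or \<open>j\<close> of the summand \<open>Q(n,j) = P(N,j)/(M choose j)\<close> is a combination, with
  coefficients rational in \<open>n\<close> and \<open>j\<close>, of \<open>Q(n,j)\<close> and \<open>T(n,j) = (N choose j)/(M choose j)\<close>.
  Creative telescoping then yields a certificate \<open>E(n,j)\<close>, linear in \<open>Q\<close> and \<open>T\<close>, with
  \<open>Q(n+1,j) = 2(n+2)/(n+1) Q(n,j) + E(n,j+1) - E(n,j)\<close>; checking it reduces to two identities
  of rational functions. Summing over \<open>j\<close> gives a first-order recurrence for \<open>S\<close> whose
  inhomogeneous part is the boundary term, and dividing by \<open>2\<^sup>n(n+1)\<close> turns it into the
  telescoping sum of the right-hand side.
\<close>

definition binom_psum :: "nat \<Rightarrow> nat \<Rightarrow> real" where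
  "binom_psum m j = (\<Sum>i=0..j. real (m choose i))"

lemma binom_psum_Suc_row: "binom_psum (Suc m) j = 2 * binom_psum m j - real (m choose j)"
  by (induction j) (simp_all add: binom_psum_def algebra_simps)

lemma binomial_Suc_row_real:
  assumes "j \<le> m"
  shows "real (Suc m choose j) = real (m choose j) * (real m + 1) / (real m + 1 - real j)"
proof -
  have "real (Suc m - j) * real (Suc m choose j) = real (Suc m) * real (m choose j)"
    using binomial_absorb_comp[of "Suc m" j] by (metis diff_Suc_1 of_nat_mult)
  moreover have "real (Suc m - j) = real m + 1 - real j" using assms by (simp add: of_nat_diff)
  ultimately show ?thesis using assms by (simp add: field_simps)
qed

lemma binomial_Suc_col_real:
  assumes "j < m"
  shows "real (m choose Suc j) = real (m choose j) * (real m - real j) / (real j + 1)"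
proof -
  have "real (Suc j) * real (m choose Suc j) = real (m - j) * real (m choose j)"
    using binomial_absorption[of j m] binomial_absorb_comp[of m j] by (metis of_nat_mult)
  moreover have "real (m - j) = real m - real j" using assms by (simp add: of_nat_diff)
  ultimately show ?thesis by (simp add: field_simps)
qed

definition psum_ratio :: "nat \<Rightarrow> nat \<Rightarrow> real" where
  "psum_ratio n j = binom_psum (3*n+2) j / real ((2*n+1) choose j)"

definition binom_ratio :: "nat \<Rightarrow> nat \<Rightarrow> real" where
  "binom_ratio n j = real ((3*n+2) choose j) / real ((2*n+1) choose j)"

definition shift_h :: "real \<Rightarrow> real \<Rightarrow> real" where
  "shift_h b a = 4 + 2*(3*b+3)/(3*b+3-a) + (3*b+4)*(3*b+3)/((3*b+4-a)*(3*b+3-a))"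

definition shift_w :: "real \<Rightarrow> real \<Rightarrow> real" where
  "shift_w b a = (2*b+3-a)*(2*b+2-a)/(2*(2*b+3)*(b+1))"

lemma psum_ratio_Suc_n:
  assumes "j \<le> 2*n+1"
  shows "psum_ratio (Suc n) j
    = (8 * psum_ratio n j - shift_h (real n) (real j) * binom_ratio n j) * shift_w (real n) (real j)"
proof -
  define N M where "N = 3*n+2" and "M = 2*n+1"
  have "j \<le> N" "j \<le> Suc N" "j \<le> M" "j \<le> Suc M" using assms by (simp_all add: N_def M_def)
  moreover have "real N + 1 = 3*real n+3" "real (Suc N) + 1 = 3*real n+4"
    "real M + 1 = 2*real n+2" "real (Suc M) + 1 = 2*real n+3" by (simp_all add: N_def M_def)
  ultimately have N1: "real (Suc N choose j) = real (N choose j) * (3*real n+3) / (3*real n+3-real j)"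
    and N2: "real (Suc (Suc N) choose j) = real (Suc N choose j) * (3*real n+4) / (3*real n+4-real j)"
    and M1: "real (Suc M choose j) = real (M choose j) * (2*real n+2) / (2*real n+2-real j)"
    and M2: "real (Suc (Suc M) choose j) = real (Suc M choose j) * (2*real n+3) / (2*real n+3-real j)"
    by (metis binomial_Suc_row_real)+
  have "binom_psum (Suc (Suc (Suc N))) j = 8 * binom_psum N j - 4 * real (N choose j)
      - 2 * real (Suc N choose j) - real (Suc (Suc N) choose j)"
    by (simp add: binom_psum_Suc_row algebra_simps)
  moreover have "3 * Suc n + 2 = Suc (Suc (Suc N))" "2 * Suc n + 1 = Suc (Suc M)"
    by (simp_all add: N_def M_def)
  ultimately have lhs: "psum_ratio (Suc n) j = (8 * binom_psum N j - 4 * real (N choose j)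
      - 2 * real (Suc N choose j) - real (Suc (Suc N) choose j)) / real (Suc (Suc M) choose j)"
    unfolding psum_ratio_def by presburger
  have "real (M choose j) \<noteq> 0" using \<open>j \<le> M\<close> by simp
  moreover have "3*real n+3-real j \<noteq> 0" "3*real n+4-real j \<noteq> 0"
    "2*real n+2-real j \<noteq> 0" "2*real n+3-real j \<noteq> 0" using assms by linarith+
  ultimately show ?thesis
    unfolding lhs N2 M2 N1 M1
    unfolding psum_ratio_def binom_ratio_def shift_h_def shift_w_def N_def[symmetric] M_def[symmetric]
    by (simp add: divide_simps) (simp add: algebra_simps)
qed

lemma binom_ratio_Suc_j:
  assumes "j \<le> 2*n"
  shows "binom_ratio n (Suc j) = (3*real n + 2 - real j) / (2*real n + 1 - real j) * binom_ratio n j"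
proof -
  define N M where "N = 3*n+2" and "M = 2*n+1"
  have "j < N" "j < M" using assms by (simp_all add: N_def M_def)
  moreover have "real N = 3*real n+2" "real M = 2*real n+1" by (simp_all add: N_def M_def)
  ultimately have N: "real (N choose Suc j) = real (N choose j) * (3*real n+2-real j) / (real j + 1)"
    and M: "real (M choose Suc j) = real (M choose j) * (2*real n+1-real j) / (real j + 1)"
    by (metis binomial_Suc_col_real)+
  show ?thesis
    unfolding binom_ratio_def N_def[symmetric] M_def[symmetric] N M by (simp add: ac_simps)
qed

lemma psum_ratio_Suc_j:
  assumes "j \<le> 2*n"
  shows "psum_ratio n (Suc j) = ((real j + 1) * psum_ratio n j
    + (3*real n + 2 - real j) * binom_ratio n j) / (2*real n + 1 - real j)"
proof -
  define N M where "N = 3*n+2" and "M = 2*n+1"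
  have "j < N" "j < M" using assms by (simp_all add: N_def M_def)
  moreover have "real N = 3*real n+2" "real M = 2*real n+1" by (simp_all add: N_def M_def)
  ultimately have N: "real (N choose Suc j) = real (N choose j) * (3*real n+2-real j) / (real j + 1)"
    and M: "real (M choose Suc j) = real (M choose j) * (2*real n+1-real j) / (real j + 1)"
    by (metis binomial_Suc_col_real)+
  have "real (M choose j) \<noteq> 0" "2*real n+1-real j \<noteq> 0" using \<open>j < M\<close> assms by simp_all
  then show ?thesis
    unfolding psum_ratio_def binom_ratio_def N_def[symmetric] M_def[symmetric]
    by (simp add: binom_psum_def N M divide_simps)
qed

text \<open>The certificate \<open>E(n,j)\<close> is \<open>telescoper\<close> below; it was found by creative telescoping,
  and the coefficient identities that follow verify it.\<close>

definition cert_poly :: "real \<Rightarrow> real \<Rightarrow> real" where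
  "cert_poly b a = 72*b^4 + 222*b^3 + 114*b^2 - 180*b - 144 + (-60*b^3 - 107*b^2 + 31*b + 84)*a
    + (17*b^2 + 13*b - 12)*a^2 - 2*b*a^3"

definition cert_v :: "real \<Rightarrow> real \<Rightarrow> real" where
  "cert_v b a = (2*a - 6*b - 10) / ((2*b+3)*(b+1))"

definition cert_g :: "real \<Rightarrow> real \<Rightarrow> real" where
  "cert_g b a = (2*b+2-a) * cert_poly b a / (2*b*(b+1)*(2*b+3)*(3*b+3-a)*(3*b+4-a))"

lemma cert_psum_coeff:
  fixes a b :: real
  assumes "0 < b" "0 \<le> a" "a \<le> b"
  shows "8 * shift_w b a = 2*(b+2)/(b+1) + (a+1) * cert_v b (a+1) - (2*b+2-a) * cert_v b a"
proof -
  have "2*b+3 \<noteq> 0" "b+1 \<noteq> 0" using assms by linarith+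
  then show ?thesis
    unfolding shift_w_def cert_v_def by (simp add: divide_simps) (simp add: algebra_simps)
qed

lemma cert_binom_coeff:
  fixes a b :: real
  assumes "0 < b" "0 \<le> a" "a \<le> b"
  shows "- shift_h b a * shift_w b a
    = (3*b+2-a) * cert_v b (a+1) + (3*b+2-a)/(2*b+1-a) * cert_g b (a+1) - cert_g b a"
proof -
  have "3*b+3-a \<noteq> 0" "3*b+4-a \<noteq> 0" "3*b+2-a \<noteq> 0" "2*b+1-a \<noteq> 0" "2*b+3 \<noteq> 0" "b+1 \<noteq> 0"
    "b \<noteq> 0" using assms by linarith+
  then show ?thesis
    unfolding shift_w_def shift_h_def cert_v_def cert_g_def cert_poly_def
    by (simp add: divide_simps)
       (simp add: algebra_simps power2_eq_square power3_eq_cube power4_eq_xxxx)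
qed

lemma cert_top_psum_coeff:
  fixes b :: real
  assumes "0 < b"
  shows "(b+1) * cert_v b (b+1) + 8 * shift_w b (b+1) = 0"
proof -
  have "2*b+3 \<noteq> 0" "b+1 \<noteq> 0" using assms by linarith+
  then show ?thesis
    unfolding shift_w_def cert_v_def by (simp add: divide_simps) (simp add: algebra_simps)
qed

lemma cert_top_binom_coeff:
  fixes b :: real
  assumes "0 < b"
  shows "cert_g b (b+1) - shift_h b (b+1) * shift_w b (b+1) = - (b+2)*(5*b+12) / (b*(8*b+12))"
proof -
  have "2*b+3 \<noteq> 0" "b+1 \<noteq> 0" "8*b+12 \<noteq> 0" "b \<noteq> 0"
    using assms by linarith+
  then show ?thesis
    unfolding shift_w_def shift_h_def cert_g_def cert_poly_def
    by (simp add: divide_simps)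
       (simp add: algebra_simps power2_eq_square power3_eq_cube power4_eq_xxxx)
qed

lemma cert_bottom:
  fixes b :: real
  assumes "0 < b"
  shows "(2*b+2) * cert_v b 0 + cert_g b 0 = - 2*(b+2)/b"
proof -
  have "2*b+3 \<noteq> 0" "b+1 \<noteq> 0" "3*b+3 \<noteq> 0" "3*b+4 \<noteq> 0" "b \<noteq> 0"
    using assms by linarith+
  then show ?thesis
    unfolding cert_v_def cert_g_def cert_poly_def
    by (simp add: divide_simps)
       (simp add: algebra_simps power2_eq_square power3_eq_cube power4_eq_xxxx)
qed

definition telescoper :: "nat \<Rightarrow> nat \<Rightarrow> real" where
  "telescoper n j = (2*real n + 2 - real j) * cert_v (real n) (real j) * psum_ratio n j
    + cert_g (real n) (real j) * binom_ratio n j"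

lemma psum_ratio_Suc_n_telescoping:
  assumes "1 \<le> n" "j \<le> n"
  shows "psum_ratio (Suc n) j
    = 2*(real n+2)/(real n+1) * psum_ratio n j + (telescoper n (Suc j) - telescoper n j)"
proof -
  define b a x t where "b = real n" and "a = real j"
    and "x = psum_ratio n j" and "t = binom_ratio n j"
  have ba: "0 < b" "0 \<le> a" "a \<le> b" using assms by (simp_all add: a_def b_def)
  have "j \<le> 2*n" using assms by simp
  have "real (Suc j) = a + 1" "2*b+2-(a+1) = 2*b+1-a" by (simp_all add: a_def)
  then have "telescoper n (Suc j) = (2*b+1-a) * cert_v b (a+1) * psum_ratio n (Suc j)
      + cert_g b (a+1) * binom_ratio n (Suc j)"
    unfolding telescoper_def b_def[symmetric] by (simp only:)
  also have "\<dots> = (2*b+1-a) * cert_v b (a+1) * (((a+1) * x + (3*b+2-a) * t) / (2*b+1-a))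
      + cert_g b (a+1) * ((3*b+2-a) / (2*b+1-a) * t)"
    using \<open>j \<le> 2*n\<close> by (simp add: psum_ratio_Suc_j binom_ratio_Suc_j a_def b_def x_def t_def)
  also have "\<dots> = (a+1) * cert_v b (a+1) * x
      + ((3*b+2-a) * cert_v b (a+1) + (3*b+2-a)/(2*b+1-a) * cert_g b (a+1)) * t"
    using ba by (simp add: divide_simps) (simp add: algebra_simps)
  finally have "telescoper n (Suc j) = (a+1) * cert_v b (a+1) * x
      + ((3*b+2-a) * cert_v b (a+1) + (3*b+2-a)/(2*b+1-a) * cert_g b (a+1)) * t" .
  moreover have "psum_ratio (Suc n) j = 8 * shift_w b a * x + (- shift_h b a * shift_w b a) * t"
    using assms unfolding a_def b_def x_def t_def by (simp add: psum_ratio_Suc_n algebra_simps)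
  ultimately show ?thesis
    unfolding cert_psum_coeff[OF ba] cert_binom_coeff[OF ba] telescoper_def
    by (simp add: a_def b_def x_def t_def algebra_simps)
qed

lemma telescoping_boundary:
  assumes "1 \<le> n"
  shows "psum_ratio (Suc n) (Suc n) + telescoper n (Suc n) - telescoper n 0
    = 2*(real n+2)/real n * (1 - (5*real n+12)/(8*real n+12) * binom_ratio n n)"
proof -
  define b x t where "b = real n" and "x = psum_ratio n (Suc n)" and "t = binom_ratio n (Suc n)"
  have "0 < b" using assms by (simp add: b_def)
  have "real (Suc n) = b + 1" "2*b+2-(b+1) = b+1" by (simp_all add: b_def)
  then have top: "psum_ratio (Suc n) (Suc n)
      = 8 * shift_w b (b+1) * x - shift_h b (b+1) * shift_w b (b+1) * t"
    and telescoper_top: "telescoper n (Suc n) = (b+1) * cert_v b (b+1) * x + cert_g b (b+1) * t"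
    using assms psum_ratio_Suc_n[of "Suc n" n]
    by (simp_all add: telescoper_def x_def t_def b_def[symmetric] algebra_simps)
  have telescoper_bottom: "telescoper n 0 = (2*b+2) * cert_v b 0 + cert_g b 0"
    by (simp add: telescoper_def psum_ratio_def binom_ratio_def binom_psum_def b_def)
  have "(3*real n + 2 - real n) / (2*real n + 1 - real n) = 2" by (simp add: divide_simps)
  then have t: "t = 2 * binom_ratio n n"
    using binom_ratio_Suc_j[of n n] unfolding t_def by simp
  have "psum_ratio (Suc n) (Suc n) + telescoper n (Suc n) - telescoper n 0
      = x * ((b+1) * cert_v b (b+1) + 8 * shift_w b (b+1))
        + t * (cert_g b (b+1) - shift_h b (b+1) * shift_w b (b+1))
        - ((2*b+2) * cert_v b 0 + cert_g b 0)"
    unfolding top telescoper_top telescoper_bottom by (simp add: algebra_simps)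
  also have "\<dots> = 2*(b+2)/b - 2 * binom_ratio n n * ((b+2)*(5*b+12) / (b*(8*b+12)))"
    unfolding cert_top_psum_coeff[OF \<open>0 < b\<close>] cert_top_binom_coeff[OF \<open>0 < b\<close>]
      cert_bottom[OF \<open>0 < b\<close>] t
    using \<open>0 < b\<close> by (simp add: divide_simps) (simp add: algebra_simps)
  also have "\<dots> = 2*(b+2)/b * (1 - (5*b+12)/(8*b+12) * binom_ratio n n)"
    using \<open>0 < b\<close> by (simp add: divide_simps) (simp add: algebra_simps)
  finally show ?thesis unfolding b_def .
qed

definition double_sum :: "nat \<Rightarrow> real" where
  "double_sum n = (\<Sum>j=0..n. psum_ratio n j)"

lemma double_sum_Suc:
  assumes "1 \<le> n"
  shows "double_sum (Suc n) = 2*(real n+2)/(real n+1) * double_sum n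
    + 2*(real n+2)/real n * (1 - (5*real n+12)/(8*real n+12) * binom_ratio n n)"
proof -
  have "double_sum (Suc n) = (\<Sum>j=0..n. psum_ratio (Suc n) j) + psum_ratio (Suc n) (Suc n)"
    by (simp add: double_sum_def)
  also have "(\<Sum>j=0..n. psum_ratio (Suc n) j)
      = (\<Sum>j=0..n. 2*(real n+2)/(real n+1) * psum_ratio n j + (telescoper n (Suc j) - telescoper n j))"
    using assms by (intro sum.cong) (simp_all add: psum_ratio_Suc_n_telescoping)
  also have "\<dots> = 2*(real n+2)/(real n+1) * double_sum n + (telescoper n (Suc n) - telescoper n 0)"
    by (simp add: sum.distrib sum_distrib_left double_sum_def sum_Suc_diff)
  finally show ?thesis using telescoping_boundary[OF assms] by simp
qed

lemma double_sum_closed_form: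
  assumes "1 \<le> n"
  shows "double_sum n / (real n + 1) = 2^n * (3/4 + (\<Sum>k=1..n-1.
    1 / (2^k * real k) * (1 - (5*real k+12)/(8*real k+12) * binom_ratio k k)))"
  using assms
proof (induction n rule: nat_induct_at_least)
  case base
  show ?case by (simp add: double_sum_def psum_ratio_def binom_psum_def)
next
  case (Suc n)
  define F where "F k = 1 / (2^k * real k) * (1 - (5*real k+12)/(8*real k+12) * binom_ratio k k)"
    for k :: nat
  have sum_split: "(\<Sum>k=1..Suc n - 1. F k) = (\<Sum>k=1..n-1. F k) + F n"
    using Suc.hyps by (cases n) simp_all
  define G where "G = 1 - (5*real n+12)/(8*real n+12) * binom_ratio n n"
  have "real n + 2 \<noteq> 0" by simp
  then have "double_sum (Suc n) / (real (Suc n) + 1)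
      = (2*(real n+2)/(real n+1) * double_sum n + 2*(real n+2)/real n * G) / (real n + 2)"
    using double_sum_Suc[OF Suc.hyps] by (simp add: G_def add.commute)
  also have "\<dots> = 2 * (double_sum n / (real n + 1)) + 2 / real n * G"
    using Suc.hyps by (simp add: divide_simps) (simp add: algebra_simps)
  also have "\<dots> = 2 * (double_sum n / (real n + 1)) + 2^Suc n * F n"
    using Suc.hyps by (simp add: F_def G_def)
  also have "\<dots> = 2^Suc n * (3/4 + (\<Sum>k=1..Suc n - 1. F k))"
    unfolding Suc.IH[folded F_def] sum_split by (simp add: algebra_simps)
  finally show ?case unfolding F_def .
qed

theorem mainTheorem10:
  fixes n :: nat
  assumes "n \<ge> 1"
  shows "(1 / (real n + 1)) * (\<Sum>j=0..n. \<Sum>i=0..j.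
            real ((3*n+2) choose i) / real ((2*n+1) choose j))
       = 2 ^ n * (3/4 + (\<Sum>k=1..n-1. (1 / (2 ^ k * real k)) *
            (1 - ((5 * real k + 12) / (8 * real k + 12)) *
                 (real ((3*k+2) choose k) / real ((2*k+1) choose k)))))"
proof -
  have "(\<Sum>j=0..n. \<Sum>i=0..j. real ((3*n+2) choose i) / real ((2*n+1) choose j)) = double_sum n"
    unfolding double_sum_def psum_ratio_def binom_psum_def by (simp add: sum_divide_distrib)
  with double_sum_closed_form[OF assms] show ?thesis
    by (simp add: binom_ratio_def)
qed

end
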